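(* Let $R,S\subset\Sigma$ be finite unions of $(-m,m)$-cylinders. Then for every integer $n\ge M+2m$: if $\alpha\ge0$, $$\kappa^{-1}\mu_\phi(S)\int_\Sigma e^{\alpha r_R^{n-(M+2m)}}d\mu_\phi\le\int_S e^{\alpha r_R^n}d\mu_\phi\le\kappa\,\mu_\phi(S)e^{\alpha(M+2m)}\int_\Sigma e^{\alpha r_R^n}d\mu_\phi;$$ if $\alpha\le0$, $$\kappa^{-1}\mu_\phi(S)e^{\alpha(M+2m)}\int_\Sigma e^{\alpha r_R^n}d\mu_\phi\le\int_S e^{\alpha r_R^n}d\mu_\phi\le\kappa\,\mu_\phi(S)\int_\Sigma e^{\alpha r_R^{n-(M+2m)}}d\mu_\phi.$$
   Context: $(\Sigma,\sigma)$ is a two-sided mixing subshift of finite type on $\{1,\dots,N\}$ (sequences $x=(x_n)_{n\in\mathbb{Z}}$ with $a_{x_nx_{n+1}}=1$ for an aperiodic $0$-$1$ matrix $(a_{ij})$), $\phi$ is Hölder continuous and $\mu_\phi$ its unique equilibrium state. A $(-m,m)$-cylinder is a set $\{x: x_j=i_j,\ -m\le j\le m\}$. $M>0$ and $\kappa>1$ are constants such that for all integrable $f,g$ with $f(x)$ depending only on $(x_n)_{n\le p}$ and $g(x)$ depending only on $(x_n)_{n\ge p+M}$ (any $p$), $\kappa^{-1}\int f\,d\mu_\phi\int g\,d\mu_\phi\le\int fg\,d\mu_\phi\le\kappa\int f\,d\mu_\phi\int g\,d\mu_\phi$ (such constants exist by the $\psi$-mixing property of $\mu_\phi$). For $D\subset\Sigma$,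 $r_D(x)$ is the smallest integer $n\ge1$ with $\sigma^n x\in D$ ($+\infty$ if none), $r_D^1=r_D$, $r_D^{n+1}=r_D^n+r_D\circ\sigma^{r_D^n}$. *)

theory Defs
  imports "HOL-Probability.Probability"
begin

text \<open>Two-sided subshift of finite type on the alphabet {1..N} with 0-1 transition matrix A
  (A i j = True means a_ij = 1).\<close>
definition SFT :: "nat \<Rightarrow> (nat \<Rightarrow> nat \<Rightarrow> bool) \<Rightarrow> (int \<Rightarrow> nat) set" where
  "SFT N A = {x. \<forall>n. x n \<in> {1..N} \<and> A (x n) (x (n + 1))}"

definition aperiodic_matrix :: "nat \<Rightarrow> (nat \<Rightarrow> nat \<Rightarrow> bool) \<Rightarrow> bool" where
  "aperiodic_matrix N A \<longleftrightarrow> (\<exists>k\<ge>1. \<forall>i\<in>{1..N}. \<forall>j\<in>{1..N}. \<exists>w :: nat \<Rightarrow> nat.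
      w 0 = i \<and> w k = j \<and> (\<forall>l\<le>k. w l \<in> {1..N}) \<and> (\<forall>l<k. A (w l) (w (Suc l))))"

definition sft_shift :: "(int \<Rightarrow> nat) \<Rightarrow> (int \<Rightarrow> nat)" where
  "sft_shift x = (\<lambda>k. x (k + 1))"

definition shiftn :: "nat \<Rightarrow> (int \<Rightarrow> nat) \<Rightarrow> (int \<Rightarrow> nat)" where
  "shiftn n x = (\<lambda>k. x (k + int n))"

definition seq_space :: "(int \<Rightarrow> nat) measure" where
  "seq_space = PiM UNIV (\<lambda>_. count_space UNIV)"

definition cylinder :: "(int \<Rightarrow> nat) set \<Rightarrow> nat \<Rightarrow> (int \<Rightarrow> nat) \<Rightarrow> (int \<Rightarrow> nat) set" where
  "cylinder \<Sigma> m w = {x \<in> \<Sigma>. \<forall>j. - int m \<le> j \<and> j \<le> int m \<longrightarrow> x j = w j}"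

definition finite_union_of_cylinders ::
    "(int \<Rightarrow> nat) set \<Rightarrow> nat \<Rightarrow> (int \<Rightarrow> nat) set \<Rightarrow> bool" where
  "finite_union_of_cylinders \<Sigma> m D \<longleftrightarrow>
     (\<exists>W. finite W \<and> D = (\<Union>w\<in>W. cylinder \<Sigma> m w))"

definition ret :: "(int \<Rightarrow> nat) set \<Rightarrow> (int \<Rightarrow> nat) \<Rightarrow> enat" where
  "ret D x = (if \<exists>n\<ge>1. shiftn n x \<in> D then enat (LEAST n. n \<ge> 1 \<and> shiftn n x \<in> D) else \<infinity>)"

fun ret_iter :: "(int \<Rightarrow> nat) set \<Rightarrow> nat \<Rightarrow> (int \<Rightarrow> nat) \<Rightarrow> enat" where
  "ret_iter D 0 x = 0"
| "ret_iter D (Suc n) x =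
     (case ret_iter D n x of \<infinity> \<Rightarrow> \<infinity> | enat k \<Rightarrow> enat k + ret D (shiftn k x))"

definition exp_ret :: "real \<Rightarrow> enat \<Rightarrow> ennreal" where
  "exp_ret \<alpha> r = (case r of enat k \<Rightarrow> ennreal (exp (\<alpha> * real k))
                    | \<infinity> \<Rightarrow> (if \<alpha> > 0 then \<infinity> else if \<alpha> = 0 then 1 else 0))"

definition decoupling :: "(int \<Rightarrow> nat) measure \<Rightarrow> nat \<Rightarrow> real \<Rightarrow> bool" where
  "decoupling \<mu> M \<kappa> \<longleftrightarrow>
    (\<forall>p::int. \<forall>f g :: (int \<Rightarrow> nat) \<Rightarrow> ennreal.
       f \<in> borel_measurable \<mu> \<longrightarrow> g \<in> borel_measurable \<mu> \<longrightarrow>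
       (\<forall>x y. (\<forall>n\<le>p. x n = y n) \<longrightarrow> f x = f y) \<longrightarrow>
       (\<forall>x y. (\<forall>n\<ge>p + int M. x n = y n) \<longrightarrow> g x = g y) \<longrightarrow>
       ennreal (1 / \<kappa>) * (\<integral>\<^sup>+x. f x \<partial>\<mu>) * (\<integral>\<^sup>+x. g x \<partial>\<mu>) \<le> (\<integral>\<^sup>+x. f x * g x \<partial>\<mu>) \<and>
       (\<integral>\<^sup>+x. f x * g x \<partial>\<mu>) \<le> ennreal \<kappa> * (\<integral>\<^sup>+x. f x \<partial>\<mu>) * (\<integral>\<^sup>+x. g x \<partial>\<mu>))"

end

theory Submission
  imports Defs
begin

text \<open>Let \<open>hits D x t\<close> count the visits of the orbit of \<open>x\<close> to \<open>D\<close> at the times \<open>1, \<dots>, t\<close>.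
  Then \<open>ret_iter D n x \<le> t\<close> iff \<open>n \<le> hits D x t\<close>, and additivity of \<open>hits\<close> along the orbit
  yields, for \<open>k \<le> n\<close>, the sandwich r^(n-k)(\<sigma>^k x) \<le> r^n(x) \<le> k + r^n(\<sigma>^k x).
  Take \<open>k = M + 2m\<close>. As \<open>R\<close> is read off the coordinates in [-m, m] and returns happen at times
  \<open>\<ge> 1\<close>, the shifted return times r^j \<circ> \<sigma>^k depend only on coordinates \<open>\<ge> m + M\<close>, whereas
  \<open>S\<close> depends only on coordinates \<open>\<le> m\<close>. So the decoupling inequality applies to the product
  of the indicator of \<open>S\<close> with a function of r^j \<circ> \<sigma>^k, and shift invariance of \<open>\<mu>\<close> removes
  \<open>\<sigma>^k\<close> from the resulting integrals. Cylinders of the subshift are replaced by cylinders of the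
  full shift, which agree with them almost everywhere because \<open>\<mu>\<close> is carried by \<open>\<Sigma>\<close>.\<close>

fun hits :: "(int \<Rightarrow> nat) set \<Rightarrow> (int \<Rightarrow> nat) \<Rightarrow> nat \<Rightarrow> nat" where
  "hits D x 0 = 0"
| "hits D x (Suc t) = hits D x t + (if shiftn (Suc t) x \<in> D then 1 else 0)"

lemma shiftn_0 [simp]: "shiftn 0 x = x"
  by (simp add: shiftn_def)

lemma shiftn_Suc: "shiftn (Suc k) x = shiftn k (sft_shift x)"
  by (simp add: shiftn_def sft_shift_def algebra_simps)

lemma shiftn_shiftn: "shiftn j (shiftn k x) = shiftn (j + k) x"
  by (simp add: shiftn_def algebra_simps)

lemma hits_mono: "t \<le> t' \<Longrightarrow> hits D x t \<le> hits D x t'"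
  by (induction t') (auto simp: le_Suc_eq)

lemma hits_le: "hits D x t \<le> t"
  by (induction t) auto

lemma hits_add: "hits D x (k + t) = hits D x k + hits D (shiftn k x) t"
  by (induction t) (auto simp: shiftn_shiftn add.commute)

lemma hits_eq_0: "(\<And>j. 1 \<le> j \<Longrightarrow> j \<le> t \<Longrightarrow> shiftn j x \<notin> D) \<Longrightarrow> hits D x t = 0"
  by (induction t) auto

lemma hits_cong:
  "(\<And>j. 1 \<le> j \<Longrightarrow> shiftn j x \<in> D \<longleftrightarrow> shiftn j y \<in> D') \<Longrightarrow> hits D x t = hits D' y t"
  by (induction t) auto

lemma ret_eq_enatD:
  assumes "ret D x = enat L"
  shows "1 \<le> L" "shiftn L x \<in> D" "\<And>j. 1 \<le> j \<Longrightarrow> j < L \<Longrightarrow> shiftn j x \<notin> D"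
proof -
  have ex: "\<exists>n\<ge>1. shiftn n x \<in> D" and L: "L = (LEAST n. n \<ge> 1 \<and> shiftn n x \<in> D)"
    using assms by (auto simp: ret_def split: if_splits)
  from ex have "L \<ge> 1 \<and> shiftn L x \<in> D" unfolding L by (metis (mono_tags, lifting) LeastI)
  then show "1 \<le> L" "shiftn L x \<in> D" by auto
  show "\<And>j. 1 \<le> j \<Longrightarrow> j < L \<Longrightarrow> shiftn j x \<notin> D"
    unfolding L using not_less_Least by blast
qed

lemma ret_eq_infinityD: "ret D x = \<infinity> \<Longrightarrow> 1 \<le> j \<Longrightarrow> shiftn j x \<notin> D"
  by (auto simp: ret_def split: if_splits)

lemma hits_after_return:
  assumes "hits D x k = n"
  shows "ret D (shiftn k x) = enat L \<Longrightarrow> hits D x (k + L) = Suc n \<and> (\<forall>u<L. hits D x (k + u) = n)"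
    and "ret D (shiftn k x) = \<infinity> \<Longrightarrow> hits D x (k + u) = n"
proof -
  assume ret: "ret D (shiftn k x) = enat L"
  note hit = ret_eq_enatD[OF ret]
  have before: "hits D (shiftn k x) u = 0" if "u < L" for u
    using that hit(3) by (intro hits_eq_0) auto
  have "hits D (shiftn k x) L = 1"
    using hit(1,2) before[of "L - 1"] by (cases L) auto
  then show "hits D x (k + L) = Suc n \<and> (\<forall>u<L. hits D x (k + u) = n)"
    using before assms by (simp add: hits_add)
next
  assume "ret D (shiftn k x) = \<infinity>"
  then have "hits D (shiftn k x) u = 0"
    by (intro hits_eq_0) (auto dest: ret_eq_infinityD)
  then show "hits D x (k + u) = n" using assms by (simp add: hits_add)
qed

lemma ret_iter_hits:
  "(ret_iter D n x = enat k \<longrightarrow> hits D x k = n \<and> (\<forall>t<k. hits D x t < n)) \<and>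
   (ret_iter D n x = \<infinity> \<longrightarrow> (\<forall>t. hits D x t < n))"
proof (induction n arbitrary: k)
  case 0
  then show ?case by (simp add: zero_enat_def)
next
  case (Suc n)
  show ?case
  proof (cases "ret_iter D n x")
    case (enat k')
    with Suc.IH have hk: "hits D x k' = n" and lt: "\<forall>t<k'. hits D x t < n" by auto
    have below: "hits D x t < Suc n" if "t < k' + L'" "\<forall>u<L'. hits D x (k' + u) = n" for t L'
    proof (cases "t < k'")
      case False
      then obtain u where "t = k' + u" by (metis le_Suc_ex not_less)
      with that show ?thesis by auto
    qed (use lt in auto)
    show ?thesis
    proof (cases "ret D (shiftn k' x)")
      case (enat L)
      note step = hits_after_return(1)[OF hk enat]
      with below[of _ L] show ?thesis using \<open>ret_iter D n x = enat k'\<close> enat by auto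
    next
      case infinity
      have "hits D x t < Suc n" for t
        using below[of t "Suc t"] hits_after_return(2)[OF hk infinity] by simp
      then show ?thesis using \<open>ret_iter D n x = enat k'\<close> infinity by simp
    qed
  next
    case infinity
    with Suc.IH show ?thesis by (auto simp: less_Suc_eq)
  qed
qed

lemma ret_iter_le_enat_iff: "ret_iter D n x \<le> enat t \<longleftrightarrow> n \<le> hits D x t"
proof (cases "ret_iter D n x")
  case (enat k)
  with ret_iter_hits[of D n x] have hk: "hits D x k = n" and lt: "\<forall>t<k. hits D x t < n" by auto
  show ?thesis
  proof (cases "k \<le> t")
    case True
    then show ?thesis using enat hk hits_mono[OF True, of D x] by simp
  next
    case False
    then show ?thesis using enat lt by (simp add: not_le)
  qed
next
  case infinity
  with ret_iter_hits[of D n x] show ?thesis by (auto simp: not_le)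
qed

lemma enat_le_if_le_enat: "(\<And>t. b \<le> enat t \<Longrightarrow> a \<le> enat t) \<Longrightarrow> (a :: enat) \<le> b"
  by (cases b) auto

lemma enat_eq_iff_le_enat: "(a :: enat) = b \<longleftrightarrow> (\<forall>t. a \<le> enat t \<longleftrightarrow> b \<le> enat t)"
proof
  assume same: "\<forall>t. a \<le> enat t \<longleftrightarrow> b \<le> enat t"
  have "a \<le> b" "b \<le> a" by (rule enat_le_if_le_enat, simp add: same)+
  then show "a = b" by (rule antisym)
qed simp

lemma ret_iter_cong:
  assumes "\<And>j. 1 \<le> j \<Longrightarrow> shiftn j x \<in> D \<longleftrightarrow> shiftn j y \<in> D'"
  shows "ret_iter D n x = ret_iter D' n y"
  using hits_cong[OF assms] by (simp add: enat_eq_iff_le_enat ret_iter_le_enat_iff)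

lemma enat_plus_ret_iter_shiftn_le:
  assumes "k \<le> n"
  shows "enat k + ret_iter D (n - k) (shiftn k x) \<le> ret_iter D n x"
proof (rule enat_le_if_le_enat)
  fix t assume "ret_iter D n x \<le> enat t"
  then have hits: "n \<le> hits D x t" by (simp add: ret_iter_le_enat_iff)
  then obtain u where t: "t = k + u"
    using hits_le[of D x t] assms by (metis le_Suc_ex order_trans)
  have "n - k \<le> hits D (shiftn k x) u"
    using hits hits_add[of D x k u] hits_le[of D x k] unfolding t by arith
  then show "enat k + ret_iter D (n - k) (shiftn k x) \<le> enat t"
    using t by (simp add: ret_iter_le_enat_iff add_left_mono[of _ "enat u" "enat k", simplified])
qed

lemma ret_iter_le_enat_plus_shiftn: "ret_iter D n x \<le> enat k + ret_iter D n (shiftn k x)"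
proof (rule enat_le_if_le_enat)
  fix t assume "enat k + ret_iter D n (shiftn k x) \<le> enat t"
  then obtain r where r: "ret_iter D n (shiftn k x) = enat r" and "k + r \<le> t"
    by (cases "ret_iter D n (shiftn k x)") auto
  have "n \<le> hits D (shiftn k x) r" using r ret_iter_le_enat_iff[of D n "shiftn k x" r] by simp
  also have "\<dots> \<le> hits D x (k + r)" by (simp add: hits_add)
  also have "\<dots> \<le> hits D x t" using \<open>k + r \<le> t\<close> by (rule hits_mono)
  finally show "ret_iter D n x \<le> enat t" by (simp add: ret_iter_le_enat_iff)
qed

lemma exp_ret_mono: "0 \<le> \<alpha> \<Longrightarrow> r \<le> r' \<Longrightarrow> exp_ret \<alpha> r \<le> exp_ret \<alpha> r'"
  by (cases r; cases r') (auto simp: exp_ret_def ennreal_leI mult_left_mono)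

lemma exp_ret_antimono: "\<alpha> \<le> 0 \<Longrightarrow> r \<le> r' \<Longrightarrow> exp_ret \<alpha> r' \<le> exp_ret \<alpha> r"
  by (cases r; cases r') (auto simp: exp_ret_def ennreal_leI mult_left_mono_neg)

lemma exp_ret_enat_plus: "exp_ret \<alpha> (enat k + r) = ennreal (exp (\<alpha> * real k)) * exp_ret \<alpha> r"
  by (cases r) (auto simp: exp_ret_def ennreal_mult' distrib_left exp_add ennreal_mult_top)

lemma measurable_shiftn:
  assumes "sft_shift \<in> measurable \<mu> \<mu>"
  shows "shiftn k \<in> measurable \<mu> \<mu>"
proof (induction k)
  case 0
  show ?case by (simp add: measurable_ident[unfolded id_def] cong: measurable_cong)
next
  case (Suc k)
  from Suc assms have "(\<lambda>x. shiftn k (sft_shift x)) \<in> measurable \<mu> \<mu>"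
    by (rule measurable_compose[rotated])
  then show ?case by (simp add: shiftn_Suc[abs_def])
qed

lemma nn_integral_shiftn:
  assumes T: "sft_shift \<in> measurable \<mu> \<mu>" and invariant: "distr \<mu> \<mu> sft_shift = \<mu>"
    and h: "h \<in> borel_measurable \<mu>"
  shows "(\<integral>\<^sup>+x. h (shiftn k x) \<partial>\<mu>) = (\<integral>\<^sup>+x. h x \<partial>\<mu>)"
proof (induction k)
  case (Suc k)
  have "(\<lambda>x. h (shiftn k x)) \<in> borel_measurable \<mu>"
    using measurable_shiftn[OF T] h by (rule measurable_compose)
  then have "(\<integral>\<^sup>+x. h (shiftn k (sft_shift x)) \<partial>\<mu>) = (\<integral>\<^sup>+x. h (shiftn k x) \<partial>distr \<mu> \<mu> sft_shift)"
    using T by (simp add: nn_integral_distr)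
  with Suc invariant show ?case by (simp add: shiftn_Suc)
qed simp

lemma hits_measurable:
  assumes "sft_shift \<in> measurable \<mu> \<mu>" and "D \<in> sets \<mu>"
  shows "(\<lambda>x. hits D x t) \<in> measurable \<mu> (count_space UNIV)"
proof (induction t)
  case (Suc t)
  have "{x \<in> space \<mu>. shiftn (Suc t) x \<in> D} \<in> sets \<mu>"
    using measurable_shiftn[OF assms(1)] assms(2) by measurable
  then have "(\<lambda>x. i + (if shiftn (Suc t) x \<in> D then 1 else 0)) \<in> measurable \<mu> (count_space UNIV)"
    for i :: nat by measurable
  from measurable_compose_countable[OF this Suc.IH] show ?case by simp
qed simp

lemma ret_iter_measurable:
  assumes "sft_shift \<in> measurable \<mu> \<mu>" and "D \<in> sets \<mu>"
  shows "ret_iter D n \<in> measurable \<mu> (count_space UNIV)"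
proof (subst measurable_count_space_eq_countable, simp, intro conjI ballI)
  fix r :: enat
  have le: "{x \<in> space \<mu>. ret_iter D n x \<le> enat t} \<in> sets \<mu>" for t
    using hits_measurable[OF assms] by (simp add: ret_iter_le_enat_iff) measurable
  have le_iff: "{x \<in> space \<mu>. ret_iter D n x \<le> enat t \<longleftrightarrow> r \<le> enat t} \<in> sets \<mu>" for t
    by (cases "r \<le> enat t") (simp_all add: le sets.sets_Collect_neg)
  have "ret_iter D n -` {r} \<inter> space \<mu> =
      (\<Inter>t. {x \<in> space \<mu>. ret_iter D n x \<le> enat t \<longleftrightarrow> r \<le> enat t})"
    by (auto simp: enat_eq_iff_le_enat[of _ r])
  also have "\<dots> \<in> sets \<mu>"
    using le_iff by (intro sets.countable_INT') auto
  finally show "ret_iter D n -` {r} \<inter> space \<mu> \<in> sets \<mu>" .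
qed auto

definition determined_by :: "int set \<Rightarrow> ((int \<Rightarrow> nat) \<Rightarrow> 'b) \<Rightarrow> bool" where
  "determined_by I f \<longleftrightarrow> (\<forall>x y. (\<forall>q\<in>I. x q = y q) \<longrightarrow> f x = f y)"

lemma determined_by_mono: "I \<subseteq> J \<Longrightarrow> determined_by I f \<Longrightarrow> determined_by J f"
  unfolding determined_by_def by blast

lemma determined_by_comp: "determined_by I f \<Longrightarrow> determined_by I (\<lambda>x. g (f x))"
  unfolding determined_by_def by metis

lemma determined_by_cylinder_Union:
  "determined_by {- int m..int m} (\<lambda>x. x \<in> (\<Union>w\<in>W. cylinder UNIV m w))"
  unfolding determined_by_def cylinder_def by auto

lemma ret_iter_shiftn_determined_by:
  assumes "determined_by {- int m..} (\<lambda>x. x \<in> D)"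
  shows "determined_by {int k + 1 - int m..} (\<lambda>x. ret_iter D j (shiftn k x))"
  unfolding determined_by_def
proof (intro allI impI ret_iter_cong)
  fix x y :: "int \<Rightarrow> nat" and i :: nat
  assume agree: "\<forall>q\<in>{int k + 1 - int m..}. x q = y q" and "1 \<le> i"
  then have "\<forall>q\<in>{- int m..}. shiftn (i + k) x q = shiftn (i + k) y q"
    by (auto simp: shiftn_def)
  with assms show "shiftn i (shiftn k x) \<in> D \<longleftrightarrow> shiftn i (shiftn k y) \<in> D"
    unfolding determined_by_def shiftn_shiftn by blast
qed

lemma decoupling_set_nn_integral:
  assumes mix: "decoupling \<mu> M \<kappa>" and S: "S \<in> sets \<mu>" "determined_by {..p} (\<lambda>x. x \<in> S)"
    and G: "G \<in> borel_measurable \<mu>" "determined_by {p + int M..} G"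
  shows "ennreal (1 / \<kappa>) * emeasure \<mu> S * (\<integral>\<^sup>+x. G x \<partial>\<mu>) \<le> (\<integral>\<^sup>+x\<in>S. G x \<partial>\<mu>)"
    and "(\<integral>\<^sup>+x\<in>S. G x \<partial>\<mu>) \<le> ennreal \<kappa> * emeasure \<mu> S * (\<integral>\<^sup>+x. G x \<partial>\<mu>)"
proof -
  have "determined_by {..p} (indicator S :: _ \<Rightarrow> ennreal)"
    using determined_by_comp[OF S(2), of of_bool] by (simp add: indicator_def[abs_def])
  then have "ennreal (1 / \<kappa>) * (\<integral>\<^sup>+x. indicator S x \<partial>\<mu>) * (\<integral>\<^sup>+x. G x \<partial>\<mu>) \<le> (\<integral>\<^sup>+x. indicator S x * G x \<partial>\<mu>)
      \<and> (\<integral>\<^sup>+x. indicator S x * G x \<partial>\<mu>) \<le> ennreal \<kappa> * (\<integral>\<^sup>+x. indicator S x \<partial>\<mu>) * (\<integral>\<^sup>+x. G x \<partial>\<mu>)"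
    using mix[unfolded decoupling_def, rule_format, where p = p and f = "indicator S" and g = G] S(1) G
    unfolding determined_by_def by auto
  then show "ennreal (1 / \<kappa>) * emeasure \<mu> S * (\<integral>\<^sup>+x. G x \<partial>\<mu>) \<le> (\<integral>\<^sup>+x\<in>S. G x \<partial>\<mu>)"
    and "(\<integral>\<^sup>+x\<in>S. G x \<partial>\<mu>) \<le> ennreal \<kappa> * emeasure \<mu> S * (\<integral>\<^sup>+x. G x \<partial>\<mu>)"
    using S(1) by (simp_all add: mult.commute[of _ "indicator S _"])
qed

lemma ret_iter_shiftn_decoupling:
  fixes g :: "enat \<Rightarrow> ennreal"
  assumes T: "sft_shift \<in> measurable \<mu> \<mu>" and mix: "decoupling \<mu> M \<kappa>"
    and R: "R \<in> sets \<mu>" "determined_by {- int m..} (\<lambda>x. x \<in> R)"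
    and S: "S \<in> sets \<mu>" "determined_by {..int m} (\<lambda>x. x \<in> S)"
    and k: "M + 2 * m \<le> k"
  shows "ennreal (1 / \<kappa>) * emeasure \<mu> S * (\<integral>\<^sup>+x. g (ret_iter R j (shiftn k x)) \<partial>\<mu>)
           \<le> (\<integral>\<^sup>+x\<in>S. g (ret_iter R j (shiftn k x)) \<partial>\<mu>)"
    and "(\<integral>\<^sup>+x\<in>S. g (ret_iter R j (shiftn k x)) \<partial>\<mu>)
           \<le> ennreal \<kappa> * emeasure \<mu> S * (\<integral>\<^sup>+x. g (ret_iter R j (shiftn k x)) \<partial>\<mu>)"
proof -
  have meas: "(\<lambda>x. g (ret_iter R j (shiftn k x))) \<in> borel_measurable \<mu>"
    by (intro measurable_compose[OF measurable_shiftn[OF T]]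
        measurable_compose[OF ret_iter_measurable[OF T R(1)]]) simp
  have "{int k + 1 - int m..} \<subseteq> {int m + int M..}"
    using k by auto
  then have "determined_by {int m + int M..} (\<lambda>x. ret_iter R j (shiftn k x))"
    using ret_iter_shiftn_determined_by[OF R(2)] by (rule determined_by_mono)
  then have "determined_by {int m + int M..} (\<lambda>x. g (ret_iter R j (shiftn k x)))"
    by (rule determined_by_comp)
  from decoupling_set_nn_integral[OF mix S meas this]
  show "ennreal (1 / \<kappa>) * emeasure \<mu> S * (\<integral>\<^sup>+x. g (ret_iter R j (shiftn k x)) \<partial>\<mu>)
           \<le> (\<integral>\<^sup>+x\<in>S. g (ret_iter R j (shiftn k x)) \<partial>\<mu>)"
    and "(\<integral>\<^sup>+x\<in>S. g (ret_iter R j (shiftn k x)) \<partial>\<mu>)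
           \<le> ennreal \<kappa> * emeasure \<mu> S * (\<integral>\<^sup>+x. g (ret_iter R j (shiftn k x)) \<partial>\<mu>)"
    by simp_all
qed

lemma exp_ret_iter_integral_bounds:
  assumes T: "sft_shift \<in> measurable \<mu> \<mu>" and invariant: "distr \<mu> \<mu> sft_shift = \<mu>"
    and mix: "decoupling \<mu> M \<kappa>"
    and R: "R \<in> sets \<mu>" "determined_by {- int m..} (\<lambda>x. x \<in> R)"
    and S: "S \<in> sets \<mu>" "determined_by {..int m} (\<lambda>x. x \<in> S)"
    and k: "M + 2 * m \<le> k" "k \<le> n"
  shows "(\<alpha> \<ge> 0 \<longrightarrow>
            ennreal (1 / \<kappa>) * emeasure \<mu> S * (\<integral>\<^sup>+x. exp_ret \<alpha> (ret_iter R (n - k) x) \<partial>\<mu>)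
            \<le> (\<integral>\<^sup>+x\<in>S. exp_ret \<alpha> (ret_iter R n x) \<partial>\<mu>)
          \<and> (\<integral>\<^sup>+x\<in>S. exp_ret \<alpha> (ret_iter R n x) \<partial>\<mu>)
            \<le> ennreal \<kappa> * emeasure \<mu> S * ennreal (exp (\<alpha> * real k)) *
              (\<integral>\<^sup>+x. exp_ret \<alpha> (ret_iter R n x) \<partial>\<mu>))
       \<and> (\<alpha> \<le> 0 \<longrightarrow>
            ennreal (1 / \<kappa>) * emeasure \<mu> S * ennreal (exp (\<alpha> * real k)) *
              (\<integral>\<^sup>+x. exp_ret \<alpha> (ret_iter R n x) \<partial>\<mu>)
            \<le> (\<integral>\<^sup>+x\<in>S. exp_ret \<alpha> (ret_iter R n x) \<partial>\<mu>)
          \<and> (\<integral>\<^sup>+x\<in>S. exp_ret \<alpha> (ret_iter R n x) \<partial>\<mu>)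
            \<le> ennreal \<kappa> * emeasure \<mu> S * (\<integral>\<^sup>+x. exp_ret \<alpha> (ret_iter R (n - k) x) \<partial>\<mu>))"
proof -
  let ?E = "\<lambda>j x. exp_ret \<alpha> (ret_iter R j x)"
  let ?L = "\<lambda>x. exp_ret \<alpha> (ret_iter R (n - k) (shiftn k x))"
  let ?U = "\<lambda>x. exp_ret \<alpha> (enat k + ret_iter R n (shiftn k x))"
  note dec = ret_iter_shiftn_decoupling[OF T mix R S k(1)]
  have E_meas: "?E j \<in> borel_measurable \<mu>" for j
    by (rule measurable_compose[OF ret_iter_measurable[OF T R(1)]]) simp
  have int_L: "(\<integral>\<^sup>+x. ?L x \<partial>\<mu>) = (\<integral>\<^sup>+x. ?E (n - k) x \<partial>\<mu>)"
    using nn_integral_shiftn[OF T invariant E_meas] .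
  have int_U: "(\<integral>\<^sup>+x. ?U x \<partial>\<mu>) = ennreal (exp (\<alpha> * real k)) * (\<integral>\<^sup>+x. ?E n x \<partial>\<mu>)"
    using measurable_compose[OF measurable_shiftn[OF T] E_meas]
    by (simp add: exp_ret_enat_plus nn_integral_cmult nn_integral_shiftn[OF T invariant E_meas])
  have L_le: "ret_iter R (n - k) (shiftn k x) \<le> ret_iter R n x" for x
    using add_increasing[OF zero_le order_refl] enat_plus_ret_iter_shiftn_le[OF k(2)]
    by (rule order_trans)
  note U_ge = ret_iter_le_enat_plus_shiftn[of R n _ k]
  have mono_S: "(\<integral>\<^sup>+x\<in>S. f x \<partial>\<mu>) \<le> (\<integral>\<^sup>+x\<in>S. f' x \<partial>\<mu>)"
    if "\<And>x. f x \<le> f' x" for f f' :: "_ \<Rightarrow> ennreal"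
    using that by (intro nn_integral_mono mult_right_mono) auto
  show ?thesis
  proof (intro conjI impI)
    assume "0 \<le> \<alpha>"
    show "ennreal (1 / \<kappa>) * emeasure \<mu> S * (\<integral>\<^sup>+x. ?E (n - k) x \<partial>\<mu>) \<le> (\<integral>\<^sup>+x\<in>S. ?E n x \<partial>\<mu>)"
      using dec(1)[of "exp_ret \<alpha>" "n - k"] mono_S[OF exp_ret_mono[OF \<open>0 \<le> \<alpha>\<close> L_le]]
      unfolding int_L by (rule order_trans)
    have "(\<integral>\<^sup>+x\<in>S. ?E n x \<partial>\<mu>) \<le> (\<integral>\<^sup>+x\<in>S. ?U x \<partial>\<mu>)"
      by (rule mono_S[OF exp_ret_mono[OF \<open>0 \<le> \<alpha>\<close> U_ge]])
    also have "\<dots> \<le> ennreal \<kappa> * emeasure \<mu> S * (\<integral>\<^sup>+x. ?U x \<partial>\<mu>)"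
      by (rule dec(2))
    finally show "(\<integral>\<^sup>+x\<in>S. ?E n x \<partial>\<mu>)
        \<le> ennreal \<kappa> * emeasure \<mu> S * ennreal (exp (\<alpha> * real k)) * (\<integral>\<^sup>+x. ?E n x \<partial>\<mu>)"
      by (simp add: int_U mult.assoc)
  next
    assume "\<alpha> \<le> 0"
    have "ennreal (1 / \<kappa>) * emeasure \<mu> S * ennreal (exp (\<alpha> * real k)) * (\<integral>\<^sup>+x. ?E n x \<partial>\<mu>)
        = ennreal (1 / \<kappa>) * emeasure \<mu> S * (\<integral>\<^sup>+x. ?U x \<partial>\<mu>)"
      by (simp add: int_U mult.assoc)
    also have "\<dots> \<le> (\<integral>\<^sup>+x\<in>S. ?U x \<partial>\<mu>)"
      by (rule dec(1))
    also have "\<dots> \<le> (\<integral>\<^sup>+x\<in>S. ?E n x \<partial>\<mu>)"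
      by (rule mono_S[OF exp_ret_antimono[OF \<open>\<alpha> \<le> 0\<close> U_ge]])
    finally show "ennreal (1 / \<kappa>) * emeasure \<mu> S * ennreal (exp (\<alpha> * real k)) * (\<integral>\<^sup>+x. ?E n x \<partial>\<mu>)
        \<le> (\<integral>\<^sup>+x\<in>S. ?E n x \<partial>\<mu>)" .
    show "(\<integral>\<^sup>+x\<in>S. ?E n x \<partial>\<mu>) \<le> ennreal \<kappa> * emeasure \<mu> S * (\<integral>\<^sup>+x. ?E (n - k) x \<partial>\<mu>)"
      using mono_S[OF exp_ret_antimono[OF \<open>\<alpha> \<le> 0\<close> L_le]] dec(2)[of "exp_ret \<alpha>" "n - k"]
      unfolding int_L by (rule order_trans)
  qed
qed

lemma cylinder_eq_Int_UNIV: "cylinder \<Sigma> m w = cylinder UNIV m w \<inter> \<Sigma>"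
  by (auto simp: cylinder_def)

lemma cylinder_UNIV_in_sets: "cylinder UNIV m w \<in> sets seq_space"
proof -
  have "cylinder UNIV m w = {x \<in> space seq_space. \<forall>j\<in>{- int m..int m}. x j = w j}"
    by (auto simp: cylinder_def seq_space_def space_PiM)
  also have "\<dots> \<in> sets seq_space"
    unfolding seq_space_def by measurable
  finally show ?thesis .
qed

lemma finite_union_of_cylindersE:
  assumes "finite_union_of_cylinders \<Sigma> m D"
  obtains D' where "D = D' \<inter> \<Sigma>" "D' \<in> sets seq_space"
    "determined_by {- int m..int m} (\<lambda>x. x \<in> D')"
proof -
  from assms obtain W where W: "finite W" "D = (\<Union>w\<in>W. cylinder \<Sigma> m w)"
    unfolding finite_union_of_cylinders_def by blast
  show ?thesis
  proof (rule that)
    show "D = (\<Union>w\<in>W. cylinder UNIV m w) \<inter> \<Sigma>"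
      using W(2) by (auto simp: cylinder_eq_Int_UNIV[of \<Sigma>])
    show "(\<Union>w\<in>W. cylinder UNIV m w) \<in> sets seq_space"
      using W(1) by (intro sets.finite_UN cylinder_UNIV_in_sets)
  qed (rule determined_by_cylinder_Union)
qed

lemma SFT_shiftn:
  assumes "x \<in> SFT N A"
  shows "shiftn j x \<in> SFT N A"
proof -
  have "x (n + int j) \<in> {1..N} \<and> A (x (n + int j)) (x (n + int j + 1))" for n
    using assms by (simp add: SFT_def)
  then show ?thesis by (auto simp: SFT_def shiftn_def ac_simps)
qed

lemma ret_iter_Int_SFT: "x \<in> SFT N A \<Longrightarrow> ret_iter (D \<inter> SFT N A) n x = ret_iter D n x"
  by (rule ret_iter_cong) (simp add: SFT_shiftn)

theorem lemma3p3:
  fixes N :: nat and A :: "nat \<Rightarrow> nat \<Rightarrow> bool" and \<mu> :: "(int \<Rightarrow> nat) measure"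
    and M m n :: nat and \<kappa> \<alpha> :: real and R S :: "(int \<Rightarrow> nat) set"
  assumes aper: "aperiodic_matrix N A"
    and prob: "prob_space \<mu>" and sets_mu: "sets \<mu> = sets seq_space"
    and supp: "emeasure \<mu> (SFT N A) = 1"
    and shift_meas: "sft_shift \<in> measurable \<mu> \<mu>" and invariant: "distr \<mu> \<mu> sft_shift = \<mu>"
    and M_pos: "M > 0" and kappa: "\<kappa> > 1" and mix: "decoupling \<mu> M \<kappa>"
    and R: "finite_union_of_cylinders (SFT N A) m R"
    and S: "finite_union_of_cylinders (SFT N A) m S"
    and n: "n \<ge> M + 2 * m"
  shows "(\<alpha> \<ge> 0 \<longrightarrow>
            ennreal (1 / \<kappa>) * emeasure \<mu> S *
              (\<integral>\<^sup>+x\<in>SFT N A. exp_ret \<alpha> (ret_iter R (n - (M + 2 * m)) x) \<partial>\<mu>)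
            \<le> (\<integral>\<^sup>+x\<in>S. exp_ret \<alpha> (ret_iter R n x) \<partial>\<mu>)
          \<and> (\<integral>\<^sup>+x\<in>S. exp_ret \<alpha> (ret_iter R n x) \<partial>\<mu>)
            \<le> ennreal \<kappa> * emeasure \<mu> S * ennreal (exp (\<alpha> * real (M + 2 * m))) *
              (\<integral>\<^sup>+x\<in>SFT N A. exp_ret \<alpha> (ret_iter R n x) \<partial>\<mu>))
       \<and> (\<alpha> \<le> 0 \<longrightarrow>
            ennreal (1 / \<kappa>) * emeasure \<mu> S * ennreal (exp (\<alpha> * real (M + 2 * m))) *
              (\<integral>\<^sup>+x\<in>SFT N A. exp_ret \<alpha> (ret_iter R n x) \<partial>\<mu>)
            \<le> (\<integral>\<^sup>+x\<in>S. exp_ret \<alpha> (ret_iter R n x) \<partial>\<mu>)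
          \<and> (\<integral>\<^sup>+x\<in>S. exp_ret \<alpha> (ret_iter R n x) \<partial>\<mu>)
            \<le> ennreal \<kappa> * emeasure \<mu> S *
              (\<integral>\<^sup>+x\<in>SFT N A. exp_ret \<alpha> (ret_iter R (n - (M + 2 * m)) x) \<partial>\<mu>))"
proof -
  interpret prob_space \<mu> by (rule prob)
  obtain R' where R': "R = R' \<inter> SFT N A" "R' \<in> sets \<mu>" "determined_by {- int m..int m} (\<lambda>x. x \<in> R')"
    using R sets_mu by (auto elim: finite_union_of_cylindersE)
  obtain S' where S': "S = S' \<inter> SFT N A" "S' \<in> sets \<mu>" "determined_by {- int m..int m} (\<lambda>x. x \<in> S')"
    using S sets_mu by (auto elim: finite_union_of_cylindersE)
  have SFT_sets: "SFT N A \<in> sets \<mu>"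
    using supp by (intro emeasure_neq_0_sets) simp
  then have AE_SFT: "AE x in \<mu>. x \<in> SFT N A"
    using supp by (subst AE_in_set_eq_1) (auto simp: measure_def)
  have int_SFT: "(\<integral>\<^sup>+x\<in>SFT N A. exp_ret \<alpha> (ret_iter R j x) \<partial>\<mu>) = (\<integral>\<^sup>+x. exp_ret \<alpha> (ret_iter R' j x) \<partial>\<mu>)" for j
    using AE_SFT by (intro nn_integral_cong_AE) (auto simp: R'(1) ret_iter_Int_SFT)
  have int_S: "(\<integral>\<^sup>+x\<in>S. exp_ret \<alpha> (ret_iter R n x) \<partial>\<mu>) = (\<integral>\<^sup>+x\<in>S'. exp_ret \<alpha> (ret_iter R' n x) \<partial>\<mu>)"
    using AE_SFT by (intro nn_integral_cong_AE) (auto simp: R'(1) S'(1) ret_iter_Int_SFT split: split_indicator)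
  have mu_S: "emeasure \<mu> S = emeasure \<mu> S'"
    using AE_SFT S' SFT_sets by (intro emeasure_eq_AE) auto
  have R'_det: "determined_by {- int m..} (\<lambda>x. x \<in> R')"
    by (rule determined_by_mono[OF _ R'(3)]) auto
  have S'_det: "determined_by {..int m} (\<lambda>x. x \<in> S')"
    by (rule determined_by_mono[OF _ S'(3)]) auto
  show ?thesis
    unfolding int_SFT int_S mu_S
    by (rule exp_ret_iter_integral_bounds[OF shift_meas invariant mix R'(2) R'_det S'(2) S'_det order_refl n])
qed

end
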